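(* Let $(\mathfrak g,[\cdot,\cdot],[\![\cdot,\cdot,\cdot]\!];\omega)$ be a symplectic Lie-Yamaguti algebra and let $( *,\{\cdot,\cdot,\cdot\})$ be the compatible pre-Lie-Yamaguti algebra structure on $\mathfrak g$ determined by $\omega(x*y,z)=-\omega(y,[x,z])$ and $\omega(\{x,y,z\},w)=\omega(x,[\![w,z,y]\!])$. Then $\omega(\{x,y,z\}_D,w)=-\omega(z,[\![x,y,w]\!])$ for all $x,y,z,w\in\mathfrak g$.
   Context: All vector spaces are over a field of characteristic $0$. A Lie-Yamaguti algebra is a vector space $\mathfrak g$ with a bilinear skew-symmetric $[\cdot,\cdot]$ and a trilinear $[\![\cdot,\cdot,\cdot]\!]$ skew-symmetric in its first two arguments such that for all $x,y,z,w,t$: (1) $[[x,y],z]+[[y,z],x]+[[z,x],y]+[\![x,y,z]\!]+[\![y,z,x]\!]+[\![z,x,y]\!]=0$; (2) $[\![[x,y],z,w]\!]+[\![[y,z],x,w]\!]+[\![[z,x],y,w]\!]=0$; (3) $[\![x,y,[z,w]]\!]=[[\![x,y,z]\!],w]+[z,[\![x,y,w]\!]]$; (4) $[\![x,y,[\![z,w,t]\!]]\!]=[\![[\![x,y,z]\!],w,t]\!]+[\![z,[\![x,y,w]\!],t]\!]+[\![z,w,[\![x,y,t]\!]]\!]$. A symplectic Lie-Yamaguti algebra is one equipped with a nondegenerate skew-symmetric bilinear form $\omega$ such that for all $x,y,z,w$: $\omega(x,[y,z])+\omega(y,[z,x])+\omega(z,[x,y])=0$ and $\omega(z,[\![x,y,w]\!])-\omega(x,[\![w,z,y]\!])+\omega(y,[\![w,z,x]\!])-\omega(w,[\![x,y,z]\!])=0$.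 For operations $*$ and $\{\cdot,\cdot,\cdot\}$ on $\mathfrak g$, $(x,y,z):=(x*y)*z-x*(y*z)$ and $\{x,y,z\}_D:=\{z,y,x\}-\{z,x,y\}+(y,x,z)-(x,y,z)$. (That the operations defined by the two displayed formulas form a pre-Lie-Yamaguti algebra compatible with $\mathfrak g$ is part of the setting.) *)

theory Defs
  imports Main "HOL.Vector_Spaces"
begin

definition bilinear_op :: "('k::field \<Rightarrow> 'v::ab_group_add \<Rightarrow> 'v) \<Rightarrow> ('v \<Rightarrow> 'v \<Rightarrow> 'v) \<Rightarrow> bool" where
  "bilinear_op scale f \<longleftrightarrow>
     (\<forall>y. Vector_Spaces.linear scale scale (\<lambda>x. f x y)) \<and> (\<forall>x. Vector_Spaces.linear scale scale (\<lambda>y. f x y))"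

definition trilinear_op :: "('k::field \<Rightarrow> 'v::ab_group_add \<Rightarrow> 'v) \<Rightarrow> ('v \<Rightarrow> 'v \<Rightarrow> 'v \<Rightarrow> 'v) \<Rightarrow> bool" where
  "trilinear_op scale f \<longleftrightarrow>
     (\<forall>y z. Vector_Spaces.linear scale scale (\<lambda>x. f x y z)) \<and> (\<forall>x z. Vector_Spaces.linear scale scale (\<lambda>y. f x y z))
     \<and> (\<forall>x y. Vector_Spaces.linear scale scale (\<lambda>z. f x y z))"

definition bilinear_form :: "('k::field \<Rightarrow> 'v::ab_group_add \<Rightarrow> 'v) \<Rightarrow> ('v \<Rightarrow> 'v \<Rightarrow> 'k) \<Rightarrow> bool" where
  "bilinear_form scale \<omega> \<longleftrightarrow>
     (\<forall>y. Vector_Spaces.linear scale (*) (\<lambda>x. \<omega> x y)) \<and> (\<forall>x. Vector_Spaces.linear scale (*) (\<lambda>y. \<omega> x y))"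

definition lie_yamaguti ::
  "('k::field \<Rightarrow> 'v::ab_group_add \<Rightarrow> 'v) \<Rightarrow> ('v \<Rightarrow> 'v \<Rightarrow> 'v) \<Rightarrow> ('v \<Rightarrow> 'v \<Rightarrow> 'v \<Rightarrow> 'v) \<Rightarrow> bool" where
  "lie_yamaguti scale br tr \<longleftrightarrow>
     vector_space scale \<and> bilinear_op scale br \<and> trilinear_op scale tr \<and>
     (\<forall>x y. br x y = - br y x) \<and>
     (\<forall>x y z. tr x y z = - tr y x z) \<and>
     (\<forall>x y z. br (br x y) z + br (br y z) x + br (br z x) y
               + tr x y z + tr y z x + tr z x y = 0) \<and>
     (\<forall>x y z w. tr (br x y) z w + tr (br y z) x w + tr (br z x) y w = 0) \<and>
     (\<forall>x y z w. tr x y (br z w) = br (tr x y z) w + br z (tr x y w)) \<and>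
     (\<forall>x y z w t. tr x y (tr z w t) = tr (tr x y z) w t + tr z (tr x y w) t + tr z w (tr x y t))"

definition symplectic_lie_yamaguti ::
  "('k::field \<Rightarrow> 'v::ab_group_add \<Rightarrow> 'v) \<Rightarrow> ('v \<Rightarrow> 'v \<Rightarrow> 'v) \<Rightarrow> ('v \<Rightarrow> 'v \<Rightarrow> 'v \<Rightarrow> 'v)
    \<Rightarrow> ('v \<Rightarrow> 'v \<Rightarrow> 'k) \<Rightarrow> bool" where
  "symplectic_lie_yamaguti scale br tr \<omega> \<longleftrightarrow>
     lie_yamaguti scale br tr \<and> bilinear_form scale \<omega> \<and>
     (\<forall>x y. \<omega> x y = - \<omega> y x) \<and>
     (\<forall>x. (\<forall>y. \<omega> x y = 0) \<longrightarrow> x = 0) \<and>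
     (\<forall>x y z. \<omega> x (br y z) + \<omega> y (br z x) + \<omega> z (br x y) = 0) \<and>
     (\<forall>x y z w. \<omega> z (tr x y w) - \<omega> x (tr w z y) + \<omega> y (tr w z x) - \<omega> w (tr x y z) = 0)"

definition assoc :: "('v::ab_group_add \<Rightarrow> 'v \<Rightarrow> 'v) \<Rightarrow> 'v \<Rightarrow> 'v \<Rightarrow> 'v \<Rightarrow> 'v" where
  "assoc m x y z = m (m x y) z - m x (m y z)"

definition sub_D :: "('v::ab_group_add \<Rightarrow> 'v \<Rightarrow> 'v) \<Rightarrow> ('v \<Rightarrow> 'v \<Rightarrow> 'v \<Rightarrow> 'v) \<Rightarrow> 'v \<Rightarrow> 'v \<Rightarrow> 'v \<Rightarrow> 'v" where
  "sub_D m br3 x y z = br3 z y x - br3 z x y + assoc m y x z - assoc m x y z"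

end

theory Submission
  imports Defs
begin

text \<open>Nondegeneracy of \<open>\<omega>\<close> together with its invariance under the bracket forces
  \<open>x * y - y * x = [x, y]\<close>. Transporting the associators of \<open>*\<close> and the operation
  \<open>{\<cdot>,\<cdot>,\<cdot>}\<close> through \<open>\<omega>\<close> then turns \<open>\<omega>({x, y, z}\<^sub>D, w)\<close> into
  \<open>\<omega>(z, \<cdot>)\<close> applied to a combination of brackets and ternary products, which the first
  Lie-Yamaguti identity collapses to \<open>-[[x, y, w]]\<close>.\<close>

lemma bilinear_op_diff_left:
  assumes "bilinear_op scale f"
  shows "f (a - b) c = f a c - f b c"
  using assms unfolding bilinear_op_def by (metis linear.axioms(3) module_hom.diff)

lemma bilinear_op_minus_right:
  assumes "bilinear_op scale f"
  shows "f a (- b) = - f a b"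
  using assms unfolding bilinear_op_def by (metis linear.axioms(3) module_hom.neg)

lemma bilinear_form_diff_left:
  assumes "bilinear_form scale \<omega>"
  shows "\<omega> (a - b) c = \<omega> a c - \<omega> b c"
  using assms unfolding bilinear_form_def by (metis linear.axioms(3) module_hom.diff)

lemma bilinear_form_add_left:
  assumes "bilinear_form scale \<omega>"
  shows "\<omega> (a + b) c = \<omega> a c + \<omega> b c"
  using assms unfolding bilinear_form_def by (metis linear.axioms(3) module_hom.add)

lemma bilinear_form_add_right:
  assumes "bilinear_form scale \<omega>"
  shows "\<omega> a (b + c) = \<omega> a b + \<omega> a c"
  using assms unfolding bilinear_form_def by (metis linear.axioms(3) module_hom.add)

lemma bilinear_form_diff_right:
  assumes "bilinear_form scale \<omega>"
  shows "\<omega> a (b - c) = \<omega> a b - \<omega> a c"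
  using assms unfolding bilinear_form_def by (metis linear.axioms(3) module_hom.diff)

lemma bilinear_form_minus_right:
  assumes "bilinear_form scale \<omega>"
  shows "\<omega> a (- b) = - \<omega> a b"
  using assms unfolding bilinear_form_def by (metis linear.axioms(3) module_hom.neg)

locale symplectic_LY =
  fixes scale :: "'k::field \<Rightarrow> 'v::ab_group_add \<Rightarrow> 'v"
    and br :: "'v \<Rightarrow> 'v \<Rightarrow> 'v" and tr :: "'v \<Rightarrow> 'v \<Rightarrow> 'v \<Rightarrow> 'v"
    and \<omega> :: "'v \<Rightarrow> 'v \<Rightarrow> 'k"
  assumes symplectic: "symplectic_lie_yamaguti scale br tr \<omega>"
begin

lemma lie_yamaguti: "lie_yamaguti scale br tr"
  using symplectic unfolding symplectic_lie_yamaguti_def by blast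

lemma br_bilinear: "bilinear_op scale br"
  using lie_yamaguti unfolding lie_yamaguti_def by metis

lemma br_skew: "br x y = - br y x"
  using lie_yamaguti unfolding lie_yamaguti_def by metis

lemma tr_skew: "tr x y z = - tr y x z"
  using lie_yamaguti unfolding lie_yamaguti_def by metis

lemma jacobi_identity:
  "br (br x y) z + br (br y z) x + br (br z x) y + tr x y z + tr y z x + tr z x y = 0"
  using lie_yamaguti unfolding lie_yamaguti_def by metis

lemma \<omega>_bilinear: "bilinear_form scale \<omega>"
  using symplectic unfolding symplectic_lie_yamaguti_def by blast

lemma \<omega>_skew: "\<omega> x y = - \<omega> y x"
  using symplectic unfolding symplectic_lie_yamaguti_def by blast

lemma \<omega>_nondegenerate: "(\<And>y. \<omega> x y = 0) \<Longrightarrow> x = 0"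
  using symplectic unfolding symplectic_lie_yamaguti_def by blast

lemma \<omega>_br_cyclic: "\<omega> x (br y z) + \<omega> y (br z x) + \<omega> z (br x y) = 0"
  using symplectic unfolding symplectic_lie_yamaguti_def by blast

lemmas br_diff_left = bilinear_op_diff_left[OF br_bilinear]
  and br_minus_right = bilinear_op_minus_right[OF br_bilinear]
  and \<omega>_add_left = bilinear_form_add_left[OF \<omega>_bilinear]
  and \<omega>_diff_left = bilinear_form_diff_left[OF \<omega>_bilinear]
  and \<omega>_add_right = bilinear_form_add_right[OF \<omega>_bilinear]
  and \<omega>_diff_right = bilinear_form_diff_right[OF \<omega>_bilinear]
  and \<omega>_minus_right = bilinear_form_minus_right[OF \<omega>_bilinear]

lemma jacobi_identity_rearranged:
  "tr w x y - tr w y x + br (br x y) w - br x (br y w) + br y (br x w) = - tr x y w"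
proof -
  have "br (br y w) x = - br x (br y w)"
    by (rule br_skew)
  moreover have "br (br w x) y = br y (br x w)"
    using br_skew[of "br w x" y] br_skew[of w x] br_minus_right[of y "br x w"] by simp
  moreover have "tr y w x = - tr w y x"
    by (rule tr_skew)
  ultimately have "br (br x y) w - br x (br y w) + br y (br x w) + tr x y w - tr w y x + tr w x y = 0"
    using jacobi_identity[of x y w] by simp
  then show ?thesis
    by (simp add: algebra_simps eq_neg_iff_add_eq_0)
qed

end

locale compatible_pre_LY = symplectic_LY +
  fixes m :: "'v::ab_group_add \<Rightarrow> 'v \<Rightarrow> 'v" and cb :: "'v \<Rightarrow> 'v \<Rightarrow> 'v \<Rightarrow> 'v"
  assumes \<omega>_m: "\<omega> (m x y) z = - \<omega> y (br x z)"
    and \<omega>_cb: "\<omega> (cb x y z) w = \<omega> x (tr w z y)"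
begin

lemma m_commutator: "m x y - m y x = br x y"
proof -
  have "\<omega> (m x y - m y x - br x y) z = 0" for z
  proof -
    have "\<omega> (m x y - m y x - br x y) z = \<omega> x (br y z) - \<omega> y (br x z) - \<omega> (br x y) z"
      by (simp add: \<omega>_diff_left \<omega>_m)
    also have "\<dots> = \<omega> x (br y z) + \<omega> y (br z x) + \<omega> z (br x y)"
      using br_skew[of x z] \<omega>_minus_right[of y "br z x"] \<omega>_skew[of "br x y" z] by simp
    finally show ?thesis
      using \<omega>_br_cyclic by simp
  qed
  then show ?thesis
    using \<omega>_nondegenerate by fastforce
qed

lemma \<omega>_assoc: "\<omega> (assoc m x y z) w = - \<omega> z (br (m x y) w) - \<omega> z (br y (br x w))"
  unfolding assoc_def \<omega>_diff_left \<omega>_m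
  using \<omega>_skew[of "m y z" "br x w"] \<omega>_m[of y z "br x w"] by simp

lemma \<omega>_sub_D: "\<omega> (sub_D m cb x y z) w = - \<omega> z (tr x y w)"
proof -
  have "\<omega> (sub_D m cb x y z) w = \<omega> z (tr w x y) - \<omega> z (tr w y x)
      + \<omega> z (br (m x y) w - br (m y x) w) - \<omega> z (br x (br y w)) + \<omega> z (br y (br x w))"
    unfolding sub_D_def \<omega>_add_left \<omega>_diff_left \<omega>_assoc \<omega>_cb \<omega>_diff_right
    by (simp add: algebra_simps)
  also have "br (m x y) w - br (m y x) w = br (br x y) w"
    by (simp flip: br_diff_left add: m_commutator)
  finally have "\<omega> (sub_D m cb x y z) w
      = \<omega> z (tr w x y - tr w y x + br (br x y) w - br x (br y w) + br y (br x w))"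
    by (simp add: \<omega>_add_right \<omega>_diff_right)
  then show ?thesis
    by (simp add: jacobi_identity_rearranged \<omega>_minus_right)
qed

end

theorem corollary4p5:
  fixes scale :: "'k::field_char_0 \<Rightarrow> 'v::ab_group_add \<Rightarrow> 'v"
    and br :: "'v \<Rightarrow> 'v \<Rightarrow> 'v" and tr :: "'v \<Rightarrow> 'v \<Rightarrow> 'v \<Rightarrow> 'v"
    and \<omega> :: "'v \<Rightarrow> 'v \<Rightarrow> 'k"
    and m :: "'v \<Rightarrow> 'v \<Rightarrow> 'v" and cb :: "'v \<Rightarrow> 'v \<Rightarrow> 'v \<Rightarrow> 'v"
  assumes "symplectic_lie_yamaguti scale br tr \<omega>"
    and "\<And>x y z. \<omega> (m x y) z = - \<omega> y (br x z)"
    and "\<And>x y z w. \<omega> (cb x y z) w = \<omega> x (tr w z y)"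
  shows "\<forall>x y z w. \<omega> (sub_D m cb x y z) w = - \<omega> z (tr x y w)"
proof -
  interpret compatible_pre_LY scale br tr \<omega> m cb
    using assms by unfold_locales
  show ?thesis
    using \<omega>_sub_D by blast
qed

end
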